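(* Let $G$ be a multigraph with unit edge capacities and terminal set ${\mathcal T}$, and let $G'$ be a legal contracted graph for $G$, obtained by contracting the clusters of a collection ${\mathcal C}$. Let $S'\subseteq V(G')\setminus{\mathcal T}$ and $E'\subseteq\operatorname{out}_{G'}(S')$ be such that $S'$ is $\alpha$-well-linked for $E'$ in $G'$, for some $\alpha<1$. Let $S\subseteq V(G)\setminus{\mathcal T}$ be obtained from $S'$ by replacing every super-node $v_C\in S'$ ($C\in{\mathcal C}$) with the vertices of $C$. Then $S$ is $\alpha/3$-well-linked for $E'$ in $G$ (where edges of $G'$ are identified with the corresponding edges of $G$, so that $E'\subseteq\operatorname{out}_G(S)$).
   Context: For a set $A$ of vertices, $\operatorname{out}(A)$ is the set of edges with exactly one endpoint in $A$. A set $A$ is $\alpha$-well-linked for a set $\tilde E\subseteq\operatorname{out}(A)$ if for every partition $(X,Y)$ of $A$, with $T_X=\tilde E\cap\operatorname{out}(X)$ and $T_Y=\tilde E\cap\operatorname{out}(Y)$, $|E(X,Y)|\geq\alpha\min\{|T_X|,|T_Y|\}$; $A$ is $\alpha$-well-linked if it is $\alpha$-well-linked for $\operatorname{out}(A)$. A flow between edges of $\operatorname{out}(S)$ is contained in $S$ if every flow path has its first and last edge in $\operatorname{out}(S)$ and all other edges in $G[S]$. A set $S\subseteq V\setminus{\mathcal T}$ with $|\operatorname{out}(S)|=z$ is a good router if $S$ is $1/3$-well-linked and every pair of edges $e,e'\in\operatorname{out}(S)$ can simultaneously send $1/z$ flow units to each other by a flow contained in $S$ with congestion at most $34$. $G'$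 is a legal contracted graph for $G$ if there is a collection ${\mathcal C}$ of disjoint good routers (containing no terminals) such that $G'$ is obtained from $G$ by contracting each $C\in{\mathcal C}$ into a super-node $v_C$ (self-loops removed, parallel edges kept); each edge of $G'$ corresponds to an edge of $G$. *)

theory Defs
  imports Complex_Main
begin

text \<open>A multigraph: vertex set, edge set (edges are named, so parallel edges are
distinct elements), and an endpoint map. Edges are undirected; the order of the
pair returned by ends is irrelevant for all notions below.\<close>

record ('v, 'e) mgraph =
  verts :: "'v set"
  edges :: "'e set"
  ends  :: "'e \<Rightarrow> 'v \<times> 'v"

definition wf_mgraph :: "('v, 'e) mgraph \<Rightarrow> bool" where
  "wf_mgraph G \<longleftrightarrow> finite (verts G) \<and> finite (edges G) \<and>
     (\<forall>e\<in>edges G. fst (ends G e) \<in> verts G \<and> snd (ends G e) \<in> verts G)"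

definition out :: "('v, 'e) mgraph \<Rightarrow> 'v set \<Rightarrow> 'e set" where
  "out G A = {e \<in> edges G. (fst (ends G e) \<in> A) \<noteq> (snd (ends G e) \<in> A)}"

definition edges_between :: "('v, 'e) mgraph \<Rightarrow> 'v set \<Rightarrow> 'v set \<Rightarrow> 'e set" where
  "edges_between G X Y = {e \<in> edges G.
      (fst (ends G e) \<in> X \<and> snd (ends G e) \<in> Y) \<or> (fst (ends G e) \<in> Y \<and> snd (ends G e) \<in> X)}"

definition well_linked_for :: "('v, 'e) mgraph \<Rightarrow> real \<Rightarrow> 'v set \<Rightarrow> 'e set \<Rightarrow> bool" where
  "well_linked_for G \<alpha> A Et \<longleftrightarrow> Et \<subseteq> out G A \<and>
     (\<forall>X Y. X \<union> Y = A \<longrightarrow> X \<inter> Y = {} \<longrightarrow>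
        real (card (edges_between G X Y)) \<ge>
          \<alpha> * real (min (card (Et \<inter> out G X)) (card (Et \<inter> out G Y))))"

definition well_linked :: "('v, 'e) mgraph \<Rightarrow> real \<Rightarrow> 'v set \<Rightarrow> bool" where
  "well_linked G \<alpha> A \<longleftrightarrow> well_linked_for G \<alpha> A (out G A)"

definition joins :: "('v, 'e) mgraph \<Rightarrow> 'e \<Rightarrow> 'v \<Rightarrow> 'v \<Rightarrow> bool" where
  "joins G e u v \<longleftrightarrow> ends G e = (u, v) \<or> ends G e = (v, u)"

definition is_walk :: "('v, 'e) mgraph \<Rightarrow> 'e list \<Rightarrow> bool" where
  "is_walk G P \<longleftrightarrow> set P \<subseteq> edges G \<and>
     (\<exists>vs. length vs = Suc (length P) \<and>
        (\<forall>i < length P. joins G (P ! i) (vs ! i) (vs ! Suc i)))"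

definition path_in :: "('v, 'e) mgraph \<Rightarrow> 'v set \<Rightarrow> 'e \<Rightarrow> 'e \<Rightarrow> 'e list \<Rightarrow> bool" where
  "path_in G S e e' P \<longleftrightarrow> is_walk G P \<and> length P \<ge> 2 \<and>
     ((hd P = e \<and> last P = e') \<or> (hd P = e' \<and> last P = e)) \<and>
     hd P \<in> out G S \<and> last P \<in> out G S \<and>
     (\<forall>a \<in> set (butlast (tl P)). fst (ends G a) \<in> S \<and> snd (ends G a) \<in> S)"

text \<open>F p P is the amount of flow for the pair p = {e,e'} sent along path P.\<close>
definition all_pairs_routable :: "('v, 'e) mgraph \<Rightarrow> 'v set \<Rightarrow> real \<Rightarrow> bool" where
  "all_pairs_routable G S c \<longleftrightarrow>
    (let z = card (out G S);
         Pairs = {{e, e'} | e e'. e \<in> out G S \<and> e' \<in> out G S \<and> e \<noteq> e'} in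
     \<exists>F :: 'e set \<Rightarrow> 'e list \<Rightarrow> real.
       (\<forall>e\<in>out G S. \<forall>e'\<in>out G S. e \<noteq> e' \<longrightarrow>
          finite {P. F {e, e'} P \<noteq> 0} \<and>
          (\<forall>P. F {e, e'} P \<noteq> 0 \<longrightarrow> F {e, e'} P > 0 \<and> path_in G S e e' P) \<and>
          (\<Sum>P\<in>{P. F {e, e'} P \<noteq> 0}. F {e, e'} P) = 1 / real z) \<and>
       (\<forall>a \<in> edges G.
          (\<Sum>p\<in>Pairs. \<Sum>P\<in>{P. F p P \<noteq> 0}. F p P * real (count_list P a)) \<le> c))"

definition good_router :: "('v, 'e) mgraph \<Rightarrow> 'v set \<Rightarrow> 'v set \<Rightarrow> bool" where
  "good_router G T S \<longleftrightarrow> S \<subseteq> verts G - T \<and> well_linked G (1/3) S \<and>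
     all_pairs_routable G S 34"

definition legal_collection :: "('v, 'e) mgraph \<Rightarrow> 'v set \<Rightarrow> 'v set set \<Rightarrow> bool" where
  "legal_collection G T \<C> \<longleftrightarrow> (\<forall>C\<in>\<C>. good_router G T C) \<and>
     (\<forall>C\<in>\<C>. \<forall>D\<in>\<C>. C \<noteq> D \<longrightarrow> C \<inter> D = {})"

text \<open>Contraction: a vertex v of G is sent to its cluster C if v lies in some C of the
collection (the super-node v_C is represented by the set C itself) and to {v} otherwise.
Self-loops are removed, parallel edges kept; each edge of the contracted graph is the
corresponding edge of G (same edge name).\<close>
definition cl :: "'v set set \<Rightarrow> 'v \<Rightarrow> 'v set" where
  "cl \<C> v = (if \<exists>C\<in>\<C>. v \<in> C then (THE C. C \<in> \<C> \<and> v \<in> C) else {v})"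

definition contract :: "('v, 'e) mgraph \<Rightarrow> 'v set set \<Rightarrow> ('v set, 'e) mgraph" where
  "contract G \<C> =
     \<lparr> verts = cl \<C> ` verts G,
       edges = {e \<in> edges G. cl \<C> (fst (ends G e)) \<noteq> cl \<C> (snd (ends G e))},
       ends = (\<lambda>e. (cl \<C> (fst (ends G e)), cl \<C> (snd (ends G e)))) \<rparr>"

end

theory Submission
  imports Defs
begin

text \<open>Let \<open>(X, Y)\<close> split \<open>S\<close>. Round it to a split of the classes of \<open>S'\<close> (clusters and
single vertices) by sending every class to the side that carries the larger part of its
boundary. An edge of the rounded cut either crosses \<open>(X, Y)\<close> between two different classes or
leaves a class from its minority part; the edges of \<open>E'\<close> that change side under the rounding
are minority-boundary edges as well. As each cluster is \<open>\<beta>\<close>-well-linked (\<open>\<beta> = 1/3\<close>), its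
minority boundary has at most \<open>1/\<beta>\<close> times as many edges as \<open>E(X, Y)\<close> has inside it.
Applying the \<open>\<alpha>\<close>-well-linkedness of \<open>S'\<close> to the rounded split and using \<open>\<alpha>, \<beta> \<le> 1\<close> to
absorb the minority-boundary edges gives the factor \<open>\<alpha> \<beta>\<close>.\<close>

lemma cl_eq_cluster:
  assumes "pairwise disjnt \<C>" "C \<in> \<C>" "v \<in> C"
  shows "cl \<C> v = C"
proof -
  have "(THE C. C \<in> \<C> \<and> v \<in> C) = C"
    by (rule the_equality) (use assms in \<open>auto simp: pairwise_def disjnt_def\<close>)
  then show ?thesis using assms by (auto simp: cl_def)
qed

lemma mem_cl: "pairwise disjnt \<C> \<Longrightarrow> v \<in> cl \<C> v"
  by (metis cl_def cl_eq_cluster singletonI)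

lemma cl_eq_cl:
  assumes "pairwise disjnt \<C>" "u \<in> cl \<C> v"
  shows "cl \<C> u = cl \<C> v"
proof (cases "\<exists>C\<in>\<C>. v \<in> C")
  case True
  then obtain C where "C \<in> \<C>" "v \<in> C" by blast
  then show ?thesis using assms cl_eq_cluster by metis
next
  case False
  then show ?thesis using assms by (simp add: cl_def)
qed

lemma pairwise_disjnt_range_cl:
  assumes "pairwise disjnt \<C>"
  shows "pairwise disjnt (range (cl \<C>))"
proof (rule pairwiseI)
  fix K L assume "K \<in> range (cl \<C>)" "L \<in> range (cl \<C>)" "K \<noteq> L"
  then obtain u v where "K = cl \<C> u" "L = cl \<C> v" by blast
  with \<open>K \<noteq> L\<close> show "disjnt K L"
    unfolding disjnt_def using cl_eq_cl[OF assms] by (metis disjoint_iff)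
qed

lemma vimage_cl:
  assumes "pairwise disjnt \<C>" "A \<subseteq> range (cl \<C>)"
  shows "cl \<C> -` A = \<Union>A"
proof
  show "cl \<C> -` A \<subseteq> \<Union>A" using mem_cl[OF assms(1)] by blast
  show "\<Union>A \<subseteq> cl \<C> -` A"
  proof
    fix v assume "v \<in> \<Union>A"
    then obtain w where "v \<in> cl \<C> w" "cl \<C> w \<in> A" using assms(2) by blast
    then show "v \<in> cl \<C> -` A" using cl_eq_cl[OF assms(1)] by simp
  qed
qed

lemma out_contract: "out (contract G \<C>) A = out G (cl \<C> -` A)"
  unfolding out_def contract_def by auto

lemma edges_between_contract:
  "A \<inter> B = {} \<Longrightarrow> edges_between (contract G \<C>) A B = edges_between G (cl \<C> -` A) (cl \<C> -` B)"
  unfolding edges_between_def contract_def by auto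

lemma out_empty: "out G {} = {}"
  by (simp add: out_def)

lemma well_linked_singleton:
  assumes "0 \<le> \<beta>"
  shows "well_linked G \<beta> {v}"
  unfolding well_linked_def well_linked_for_def
proof (intro conjI subset_refl allI impI)
  fix X Y assume "X \<union> Y = {v}" "X \<inter> Y = {}"
  then have "X = {} \<or> Y = {}"
    by (metis Int_absorb1 Un_upper1 Un_upper2 subset_singletonD)
  then have "min (card (out G {v} \<inter> out G X)) (card (out G {v} \<inter> out G Y)) = 0"
    by (auto simp: out_empty)
  then show "\<beta> * real (min (card (out G {v} \<inter> out G X)) (card (out G {v} \<inter> out G Y)))
      \<le> real (card (edges_between G X Y))" by simp
qed

lemma well_linked_cl:
  assumes "pairwise disjnt \<C>" "\<forall>C\<in>\<C>. well_linked G \<beta> C" "0 \<le> \<beta>"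
  shows "well_linked G \<beta> (cl \<C> v)"
proof (cases "\<exists>C\<in>\<C>. v \<in> C")
  case True
  then obtain C where "C \<in> \<C>" "v \<in> C" by blast
  then have "cl \<C> v = C" by (rule cl_eq_cluster[OF assms(1)])
  with \<open>C \<in> \<C>\<close> show ?thesis using assms(2) by simp
next
  case False
  then have "cl \<C> v = {v}" by (simp add: cl_def)
  then show ?thesis using well_linked_singleton[OF assms(3)] by simp
qed

lemma mem_out_iff:
  "e \<in> out G A \<longleftrightarrow> e \<in> edges G \<and> (\<exists>u v. joins G e u v \<and> u \<in> A \<and> v \<notin> A)"
  unfolding out_def joins_def by (cases "ends G e") auto

lemma mem_edges_between_iff:
  "e \<in> edges_between G A B \<longleftrightarrow> e \<in> edges G \<and> (\<exists>u v. joins G e u v \<and> u \<in> A \<and> v \<in> B)"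
  unfolding edges_between_def joins_def by (cases "ends G e") auto

lemma joins_sym: "joins G e u v \<Longrightarrow> joins G e v u"
  by (auto simp: joins_def)

lemma joins_unique: "joins G e u v \<Longrightarrow> joins G e u' v' \<Longrightarrow> u' = u \<and> v' = v \<or> u' = v \<and> v' = u"
  by (auto simp: joins_def)

lemma finite_out: "finite (edges G) \<Longrightarrow> finite (out G A)"
  by (simp add: out_def)

lemma finite_edges_between: "finite (edges G) \<Longrightarrow> finite (edges_between G A B)"
  by (simp add: edges_between_def)

lemma card_split_le:
  assumes "A \<subseteq> B \<union> C" "finite B" "finite C"
  shows "card A \<le> card B + card C"
  using card_mono[OF _ assms(1)] card_Un_le[of B C] assms(2,3) by fastforce

locale class_split =
  fixes G :: "('v, 'e) mgraph" and S' :: "'v set set" and X Y :: "'v set"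
  assumes finite_edges: "finite (edges G)"
    and finite_classes: "finite S'"
    and disjoint_classes: "pairwise disjnt S'"
    and split_cover: "X \<union> Y = \<Union>S'"
    and split_disjoint: "X \<inter> Y = {}"
begin

definition X_classes :: "'v set set" where
  "X_classes = {K \<in> S'. card (out G K \<inter> out G (K \<inter> Y)) \<le> card (out G K \<inter> out G (K \<inter> X))}"

definition Y_classes :: "'v set set" where
  "Y_classes = S' - X_classes"

definition minority :: "'v set \<Rightarrow> 'v set" where
  "minority K = (if K \<in> X_classes then K \<inter> Y else K \<inter> X)"

definition minority_boundary :: "'e set" where
  "minority_boundary = (\<Union>K\<in>S'. out G K \<inter> out G (minority K))"

definition inner_cut :: "'e set" where
  "inner_cut = (\<Union>K\<in>S'. edges_between G (K \<inter> X) (K \<inter> Y))"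

lemma class_unique: "K \<in> S' \<Longrightarrow> L \<in> S' \<Longrightarrow> u \<in> K \<Longrightarrow> u \<in> L \<Longrightarrow> K = L"
  using disjoint_classes unfolding pairwise_def disjnt_def by blast

lemma classes_subset: "X_classes \<subseteq> S'" "Y_classes \<subseteq> S'"
  by (auto simp: X_classes_def Y_classes_def)

lemma classes_cover: "X_classes \<union> Y_classes = S'"
  by (auto simp: X_classes_def Y_classes_def)

lemma classes_disjoint: "X_classes \<inter> Y_classes = {}"
  by (auto simp: Y_classes_def)

lemma minority_subset: "minority K \<subseteq> K"
  by (auto simp: minority_def)

lemma minority_if_not_X_class: "K \<in> S' \<Longrightarrow> K \<notin> X_classes \<Longrightarrow> K \<inter> X \<subseteq> minority K"
  by (simp add: minority_def)

lemma minority_if_not_Y_class: "K \<in> S' \<Longrightarrow> K \<notin> Y_classes \<Longrightarrow> K \<inter> Y \<subseteq> minority K"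
  by (simp add: minority_def Y_classes_def)

lemma card_minority_boundary_class:
  "K \<in> S' \<Longrightarrow> card (out G K \<inter> out G (minority K)) =
     min (card (out G K \<inter> out G (K \<inter> X))) (card (out G K \<inter> out G (K \<inter> Y)))"
  by (auto simp: minority_def X_classes_def)

lemma well_linked_minority_boundary_class:
  assumes "well_linked G \<beta> K" "K \<in> S'"
  shows "\<beta> * real (card (out G K \<inter> out G (minority K)))
    \<le> real (card (edges_between G (K \<inter> X) (K \<inter> Y)))"
proof -
  have "(K \<inter> X) \<union> (K \<inter> Y) = K" "(K \<inter> X) \<inter> (K \<inter> Y) = {}"
    using assms(2) split_cover split_disjoint by auto
  then show ?thesis
    using assms card_minority_boundary_class unfolding well_linked_def well_linked_for_def by metis
qed

lemma minority_boundary_bound: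
  assumes "\<forall>K\<in>S'. well_linked G \<beta> K" "0 \<le> \<beta>"
  shows "\<beta> * real (card minority_boundary) \<le> real (card inner_cut)"
proof -
  have disjoint_pieces: "edges_between G (K \<inter> X) (K \<inter> Y) \<inter> edges_between G (L \<inter> X) (L \<inter> Y) = {}"
    if "K \<in> S'" "L \<in> S'" "K \<noteq> L" for K L
    using that class_unique by (auto simp: edges_between_def)
  have "\<beta> * real (card minority_boundary)
      \<le> \<beta> * (\<Sum>K\<in>S'. real (card (out G K \<inter> out G (minority K))))"
    unfolding minority_boundary_def
    using card_UN_le[OF finite_classes, of "\<lambda>K. out G K \<inter> out G (minority K)"] assms(2)
    by (simp add: mult_left_mono flip: of_nat_sum)
  also have "\<dots> \<le> (\<Sum>K\<in>S'. real (card (edges_between G (K \<inter> X) (K \<inter> Y))))"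
    unfolding sum_distrib_left
    using assms(1) well_linked_minority_boundary_class by (intro sum_mono) blast
  also have "\<dots> = real (card inner_cut)"
    unfolding inner_cut_def
    using card_UN_disjoint[OF finite_classes, of "\<lambda>K. edges_between G (K \<inter> X) (K \<inter> Y)"]
      finite_edges_between[OF finite_edges] disjoint_pieces
    by simp
  finally show ?thesis .
qed

lemma inner_cut_subset: "inner_cut \<subseteq> edges_between G X Y"
  by (auto simp: inner_cut_def edges_between_def)

lemma minority_boundaryI:
  assumes "K \<in> S'" "u \<in> minority K" "joins G e u v" "e \<in> edges G" "v \<notin> K"
  shows "e \<in> minority_boundary"
proof -
  have "u \<in> K" "v \<notin> minority K" using assms(2,5) minority_subset by blast+
  then have "e \<in> out G K \<inter> out G (minority K)"
    using assms(2-5) by (auto simp: mem_out_iff)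
  then show ?thesis using assms(1) by (auto simp: minority_boundary_def)
qed

lemma rounded_cut_subset:
  "edges_between G (\<Union>X_classes) (\<Union>Y_classes) \<subseteq> (edges_between G X Y - inner_cut) \<union> minority_boundary"
proof
  fix e assume "e \<in> edges_between G (\<Union>X_classes) (\<Union>Y_classes)"
  then obtain u v where e: "e \<in> edges G" "joins G e u v"
    and "u \<in> \<Union>X_classes" "v \<in> \<Union>Y_classes"
    unfolding mem_edges_between_iff by blast
  then obtain K L where K: "K \<in> X_classes" "u \<in> K" and L: "L \<in> Y_classes" "v \<in> L"
    by blast
  have "K \<in> S'" "L \<in> S'" "K \<noteq> L" using K L classes_subset classes_disjoint by auto
  then have "v \<notin> K" "u \<notin> L" using class_unique[of K L] K(2) L(2) by blast+
  have "u \<in> X \<union> Y" "v \<in> X \<union> Y" using \<open>K \<in> S'\<close> \<open>L \<in> S'\<close> K L split_cover by auto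
  then consider "u \<in> Y" | "v \<in> X" | "u \<in> X" "v \<in> Y" by blast
  then show "e \<in> (edges_between G X Y - inner_cut) \<union> minority_boundary"
  proof cases
    case 1
    have "K \<notin> Y_classes" using K(1) classes_disjoint by blast
    with 1 have "u \<in> minority K"
      using minority_if_not_Y_class[OF \<open>K \<in> S'\<close>] K(2) by blast
    then have "e \<in> minority_boundary" by (rule minority_boundaryI[OF \<open>K \<in> S'\<close> _ e(2,1) \<open>v \<notin> K\<close>])
    then show ?thesis by blast
  next
    case 2
    have "L \<notin> X_classes" using L(1) classes_disjoint by blast
    with 2 have "v \<in> minority L"
      using minority_if_not_X_class[OF \<open>L \<in> S'\<close>] L(2) by blast
    then have "e \<in> minority_boundary"
      by (rule minority_boundaryI[OF \<open>L \<in> S'\<close> _ joins_sym[OF e(2)] e(1) \<open>u \<notin> L\<close>])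
    then show ?thesis by blast
  next
    case 3
    then have "e \<in> edges_between G X Y" unfolding mem_edges_between_iff using e by blast
    moreover have "e \<notin> inner_cut"
    proof
      assume "e \<in> inner_cut"
      then obtain M where "M \<in> S'" "e \<in> edges_between G (M \<inter> X) (M \<inter> Y)"
        unfolding inner_cut_def by blast
      then obtain u' v' where "joins G e u' v'" "u' \<in> M" "v' \<in> M"
        unfolding mem_edges_between_iff by blast
      then have "u \<in> M" "v \<in> M" using joins_unique[OF e(2) \<open>joins G e u' v'\<close>] by auto
      then have "M = K" "M = L"
        using \<open>M \<in> S'\<close> \<open>K \<in> S'\<close> \<open>L \<in> S'\<close> K(2) L(2) class_unique by blast+
      with \<open>K \<noteq> L\<close> show False by simp
    qed
    ultimately show ?thesis by blast
  qed
qed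

lemma rounded_cut_disjoint_out: "edges_between G (\<Union>X_classes) (\<Union>Y_classes) \<inter> out G (\<Union>S') = {}"
  using classes_subset by (auto simp: edges_between_def out_def)

lemma out_subset_rounded:
  assumes "Z \<subseteq> \<Union>S'" "Z' \<subseteq> S'" "\<And>K. K \<in> S' \<Longrightarrow> K \<notin> Z' \<Longrightarrow> K \<inter> Z \<subseteq> minority K"
  shows "out G (\<Union>S') \<inter> out G Z \<subseteq> out G (\<Union>Z') \<union> minority_boundary"
proof
  fix e assume "e \<in> out G (\<Union>S') \<inter> out G Z"
  then have "e \<in> out G (\<Union>S')" "e \<in> out G Z" by blast+
  then obtain u v u' v' where e: "e \<in> edges G" "joins G e u v" "u \<in> \<Union>S'" "v \<notin> \<Union>S'"
    and "joins G e u' v'" "u' \<in> Z" "v' \<notin> Z"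
    unfolding mem_out_iff by blast
  from joins_unique[OF e(2) \<open>joins G e u' v'\<close>] \<open>u' \<in> Z\<close> have "u \<in> Z"
    using assms(1) e(4) by blast
  obtain K where K: "K \<in> S'" "u \<in> K" using e(3) by blast
  have "v \<notin> K" using K e(4) by blast
  show "e \<in> out G (\<Union>Z') \<union> minority_boundary"
  proof (cases "K \<in> Z'")
    case True
    have "v \<notin> \<Union>Z'" using e(4) assms(2) by blast
    then have "e \<in> out G (\<Union>Z')"
      unfolding mem_out_iff using e(1,2) K True by blast
    then show ?thesis by blast
  next
    case False
    then have "u \<in> minority K" using assms(3) K \<open>u \<in> Z\<close> by blast
    then have "e \<in> minority_boundary" by (rule minority_boundaryI[OF K(1) _ e(2,1) \<open>v \<notin> K\<close>])
    then show ?thesis by blast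
  qed
qed

lemma cut_bound:
  assumes wl: "\<forall>K\<in>S'. well_linked G \<beta> K" and "0 \<le> \<beta>" "\<beta> \<le> 1" "0 \<le> \<alpha>" "\<alpha> \<le> 1"
    and E: "E \<subseteq> out G (\<Union>S')"
    and rounded: "\<alpha> * real (min (card (E \<inter> out G (\<Union>X_classes))) (card (E \<inter> out G (\<Union>Y_classes))))
      \<le> real (card (edges_between G (\<Union>X_classes) (\<Union>Y_classes)))"
  shows "\<alpha> * \<beta> * real (min (card (E \<inter> out G X)) (card (E \<inter> out G Y)))
      \<le> real (card (edges_between G X Y))"
proof -
  define C where "C = edges_between G (\<Union>X_classes) (\<Union>Y_classes)"
  define M where "M = minority_boundary"
  define outer where "outer = edges_between G X Y - inner_cut"
  have fin_out: "finite (out G A)" for A by (rule finite_out[OF finite_edges])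
  have fin: "finite M" "finite E" "finite C" "finite (edges_between G X Y)"
    using E fin_out finite_classes finite_edges_between[OF finite_edges]
    by (auto simp: M_def minority_boundary_def C_def intro: finite_subset)
  have side: "card (E \<inter> out G Z) \<le> card (E \<inter> out G (\<Union>Z')) + card (M \<inter> E)"
    if "Z \<subseteq> \<Union>S'" "Z' \<subseteq> S'" "\<And>K. K \<in> S' \<Longrightarrow> K \<notin> Z' \<Longrightarrow> K \<inter> Z \<subseteq> minority K" for Z Z'
  proof (rule card_split_le)
    show "E \<inter> out G Z \<subseteq> E \<inter> out G (\<Union>Z') \<union> M \<inter> E"
      using out_subset_rounded[OF that] E by (auto simp: M_def)
  qed (use fin in auto)
  have "card (E \<inter> out G X) \<le> card (E \<inter> out G (\<Union>X_classes)) + card (M \<inter> E)"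
    by (rule side) (use split_cover classes_subset minority_if_not_X_class in auto)
  moreover have "card (E \<inter> out G Y) \<le> card (E \<inter> out G (\<Union>Y_classes)) + card (M \<inter> E)"
    by (rule side) (use split_cover classes_subset minority_if_not_Y_class in auto)
  ultimately have "\<alpha> * real (min (card (E \<inter> out G X)) (card (E \<inter> out G Y)))
      \<le> \<alpha> * real (min (card (E \<inter> out G (\<Union>X_classes))) (card (E \<inter> out G (\<Union>Y_classes)))) + \<alpha> * card (M \<inter> E)"
    using \<open>0 \<le> \<alpha>\<close> by (simp add: mult_left_mono flip: distrib_left)
  also have "\<dots> \<le> card C + card (M \<inter> E)"
    using rounded \<open>\<alpha> \<le> 1\<close> mult_right_mono[of \<alpha> 1 "real (card (M \<inter> E))"] by (simp add: C_def)
  also have "\<dots> \<le> card outer + card M"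
  proof -
    have "card C \<le> card outer + card (M \<inter> C)"
      using rounded_cut_subset fin by (intro card_split_le) (auto simp: C_def outer_def M_def)
    moreover have "card (M \<inter> E) + card (M \<inter> C) \<le> card M"
    proof -
      have "C \<inter> E = {}" using rounded_cut_disjoint_out E by (auto simp: C_def)
      then have "card (M \<inter> E) + card (M \<inter> C) = card (M \<inter> E \<union> M \<inter> C)"
        using fin by (intro card_Un_disjoint[symmetric]) auto
      also have "\<dots> \<le> card M" using fin by (intro card_mono) auto
      finally show ?thesis .
    qed
    ultimately show ?thesis by linarith
  qed
  finally have "\<alpha> * \<beta> * real (min (card (E \<inter> out G X)) (card (E \<inter> out G Y)))
      \<le> \<beta> * card outer + \<beta> * card M"
    using \<open>0 \<le> \<beta>\<close> mult_left_mono by (fastforce simp: algebra_simps)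
  also have "\<dots> \<le> card outer + card inner_cut"
    using minority_boundary_bound[OF wl \<open>0 \<le> \<beta>\<close>] \<open>\<beta> \<le> 1\<close>
      mult_right_mono[of \<beta> 1 "real (card outer)"] by (simp add: M_def)
  also have "\<dots> = card (edges_between G X Y)"
    using inner_cut_subset fin(4) card_Diff_subset[of inner_cut] card_mono[OF fin(4) inner_cut_subset]
    by (simp add: outer_def finite_subset)
  finally show ?thesis .
qed

end

lemma well_linked_for_Union:
  assumes "finite (edges G)" "finite S'" "pairwise disjnt S'"
    and "\<forall>K\<in>S'. well_linked G \<beta> K" "0 \<le> \<beta>" "\<beta> \<le> 1" "\<alpha> \<le> 1"
    and E: "E \<subseteq> out G (\<Union>S')"
    and classwise: "\<And>P Q. P \<union> Q = S' \<Longrightarrow> P \<inter> Q = {} \<Longrightarrow>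
      \<alpha> * real (min (card (E \<inter> out G (\<Union>P))) (card (E \<inter> out G (\<Union>Q))))
        \<le> real (card (edges_between G (\<Union>P) (\<Union>Q)))"
  shows "well_linked_for G (\<alpha> * \<beta>) (\<Union>S') E"
  unfolding well_linked_for_def
proof (intro conjI allI impI)
  show "E \<subseteq> out G (\<Union>S')" by (fact E)
  fix X Y assume "X \<union> Y = \<Union>S'" "X \<inter> Y = {}"
  then interpret class_split G S' X Y
    using assms(1-3) by unfold_locales
  show "\<alpha> * \<beta> * real (min (card (E \<inter> out G X)) (card (E \<inter> out G Y)))
      \<le> real (card (edges_between G X Y))"
  proof (cases "0 \<le> \<alpha>")
    case True
    with assms(4-7) E show ?thesis
      by (intro cut_bound classwise classes_cover classes_disjoint)
  next
    case False
    then have "\<alpha> * \<beta> \<le> 0" using \<open>0 \<le> \<beta>\<close> by (simp add: mult_nonpos_nonneg)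
    then have "\<alpha> * \<beta> * real (min (card (E \<inter> out G X)) (card (E \<inter> out G Y))) \<le> 0"
      by (simp add: mult_nonpos_nonneg)
    then show ?thesis by linarith
  qed
qed

lemma well_linked_for_contract:
  assumes "wf_mgraph G" "pairwise disjnt \<C>" "\<forall>C\<in>\<C>. well_linked G \<beta> C" "0 \<le> \<beta>" "\<beta> \<le> 1"
    and "\<alpha> \<le> 1" "S' \<subseteq> verts (contract G \<C>)" "well_linked_for (contract G \<C>) \<alpha> S' E"
  shows "well_linked_for G (\<alpha> * \<beta>) (\<Union>S') E"
proof -
  have "S' \<subseteq> cl \<C> ` verts G" using assms(7) by (simp add: contract_def)
  then have classes: "S' \<subseteq> range (cl \<C>)" and "finite S'"
    using assms(1) finite_surj by (auto simp: wf_mgraph_def)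
  have Union_eq: "\<Union>P = cl \<C> -` P" if "P \<subseteq> S'" for P
    using vimage_cl[OF assms(2)] classes that by blast
  show ?thesis
  proof (rule well_linked_for_Union)
    show "finite (edges G)" using assms(1) by (simp add: wf_mgraph_def)
    show "pairwise disjnt S'"
      using pairwise_disjnt_range_cl[OF assms(2)] classes by (rule pairwise_subset)
    show "\<forall>K\<in>S'. well_linked G \<beta> K"
      using classes well_linked_cl[OF assms(2-4)] by blast
    show "E \<subseteq> out G (\<Union>S')"
      using assms(8) Union_eq[of S'] by (simp add: well_linked_for_def out_contract)
    fix P Q assume "P \<union> Q = S'" "P \<inter> Q = {}"
    then show "\<alpha> * real (min (card (E \<inter> out G (\<Union>P))) (card (E \<inter> out G (\<Union>Q))))
        \<le> real (card (edges_between G (\<Union>P) (\<Union>Q)))"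
      using assms(8) Union_eq[of P] Union_eq[of Q]
      by (auto simp: well_linked_for_def out_contract edges_between_contract)
  qed (use \<open>finite S'\<close> assms(4-6) in auto)
qed

theorem claim3:
  fixes G :: "('v, 'e) mgraph" and T :: "'v set" and \<C> :: "'v set set"
    and S' :: "'v set set" and E' :: "'e set" and \<alpha> :: real
  assumes "wf_mgraph G"
    and "T \<subseteq> verts G"
    and "legal_collection G T \<C>"
    and "S' \<subseteq> verts (contract G \<C>) - (\<lambda>t. {t}) ` T"
    and "well_linked_for (contract G \<C>) \<alpha> S' E'"
    and "\<alpha> < 1"
  shows "well_linked_for G (\<alpha> / 3) (\<Union> S') E'"
proof -
  have "pairwise disjnt \<C>" and "\<forall>C\<in>\<C>. well_linked G (1/3) C"
    using assms(3) by (auto simp: legal_collection_def good_router_def pairwise_def disjnt_def)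
  with assms have "well_linked_for G (\<alpha> * (1/3)) (\<Union>S') E'"
    by (intro well_linked_for_contract) auto
  then show ?thesis by simp
qed

end
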